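(* Let $m\ge2$ be an integer and $j\in\{1,\dots,m-1\}$. The ideal $\langle X^m,X^{m-j}Y^j,Y^m\rangle$ of $R$ is an atom of $\mathcal I(R)$ if and only if $m\neq 2j$.
   Context: Let $D$ be an integral domain, $N\ge2$, $R=D[X_1,\dots,X_N]$, $X=X_1$, $Y=X_2$. $\mathcal I(R)$ denotes the monoid of nonzero ideals of $R$ under ideal multiplication (identity $R$, whose only unit is $R$). Standing assumption: $\mathcal I(R)$ is a BF-monoid. An atom of $\mathcal I(R)$ is an ideal $I\in\mathcal I(R)$, $I\ne R$, such that $I=\mathfrak a\mathfrak b$ with $\mathfrak a,\mathfrak b\in\mathcal I(R)$ forces $\mathfrak a=R$ or $\mathfrak b=R$. *)

theory Defs
  imports "HOL-Library.Poly_Mapping" "HOL-Library.Cardinality"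
begin

(* Polynomial ring in the variables indexed by a finite type 'n over 'a, as
   finitely supported maps from monomials to coefficients, with convolution product. *)

type_synonym ('n, 'a) mpoly_ring = "('n \<Rightarrow>\<^sub>0 nat) \<Rightarrow>\<^sub>0 'a"

definition var :: "'n \<Rightarrow> ('n, 'a::comm_ring_1) mpoly_ring" where
  "var i = Poly_Mapping.single (Poly_Mapping.single i 1) 1"

definition is_ideal :: "'r::comm_ring_1 set \<Rightarrow> bool" where
  "is_ideal I \<longleftrightarrow> 0 \<in> I \<and> (\<forall>a\<in>I. \<forall>b\<in>I. a + b \<in> I) \<and> (\<forall>r. \<forall>a\<in>I. r * a \<in> I)"

definition ideal_gen :: "'r::comm_ring_1 set \<Rightarrow> 'r set" where
  "ideal_gen S = \<Inter>{I. is_ideal I \<and> S \<subseteq> I}"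

definition ideal_mult :: "'r::comm_ring_1 set \<Rightarrow> 'r set \<Rightarrow> 'r set" where
  "ideal_mult I J = ideal_gen {a * b | a b. a \<in> I \<and> b \<in> J}"

text \<open>Elements of the monoid I(R) of nonzero ideals.\<close>
definition nz_ideal :: "'r::comm_ring_1 set \<Rightarrow> bool" where
  "nz_ideal I \<longleftrightarrow> is_ideal I \<and> I \<noteq> {0}"

definition ideal_atom :: "'r::comm_ring_1 set \<Rightarrow> bool" where
  "ideal_atom I \<longleftrightarrow> nz_ideal I \<and> I \<noteq> UNIV \<and>
     (\<forall>A B. nz_ideal A \<longrightarrow> nz_ideal B \<longrightarrow> I = ideal_mult A B \<longrightarrow> A = UNIV \<or> B = UNIV)"

fun ideal_prod :: "'r::comm_ring_1 set list \<Rightarrow> 'r set" where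
  "ideal_prod [] = UNIV"
| "ideal_prod (A # As) = ideal_mult A (ideal_prod As)"

definition ideal_lengths :: "'r::comm_ring_1 set \<Rightarrow> nat set" where
  "ideal_lengths I = {length As | As. (\<forall>A\<in>set As. ideal_atom A) \<and> ideal_prod As = I}"

definition ideal_monoid_BF :: "'r::comm_ring_1 itself \<Rightarrow> bool" where
  "ideal_monoid_BF _ \<longleftrightarrow> (\<forall>I::'r set. nz_ideal I \<and> I \<noteq> UNIV \<longrightarrow>
      ideal_lengths I \<noteq> {} \<and> finite (ideal_lengths I))"

end

theory Submission
  imports Defs "HOL-Library.Countable" "HOL-Computational_Algebra.Polynomial"
begin

text \<open>
  If \<open>m = 2 j\<close> the ideal is the square of \<open>(X ^ j, Y ^ j)\<close>. Otherwise let \<open>I = A B\<close> with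
  \<open>A\<close>, \<open>B\<close> nonzero, and let \<open>a\<close>, \<open>b\<close> be the least total degrees of monomials occurring in
  \<open>A\<close> and \<open>B\<close>. Every monomial occurring in \<open>I\<close> is divisible by a generator, and the product
  of the least terms (for a graded monomial order) of elements of \<open>A\<close> and \<open>B\<close> survives; hence
  \<open>a + b = m\<close>. If \<open>a = 0\<close>, some element of \<open>A\<close> has a nonzero constant term; setting
  \<open>Y = 0\<close> then produces \<open>\<alpha> \<in> A\<close> with \<open>\<alpha> \<equiv> 1\<close> modulo \<open>Y\<close>, and \<open>1 \<in> A\<close> because
  \<open>(1 - \<alpha>) ^ m \<in> (Y ^ m) \<subseteq> A\<close>. If \<open>a, b > 0\<close>, the parts of degree \<open>a\<close> and \<open>b\<close> in \<open>X\<close>,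
  \<open>Y\<close>, dehomogenized at \<open>X = 1\<close>, are univariate polynomials \<open>p\<close>, \<open>q\<close> of degrees at most
  \<open>a\<close>, \<open>b\<close> whose products are supported on \<open>{0, j, m}\<close>, and \<open>1\<close> and \<open>t ^ m\<close> lie in the
  span of these products. As \<open>m \<noteq> 2 j\<close>, the identity \<open>(p\<^sub>1 q\<^sub>1) (p\<^sub>2 q\<^sub>2) = (p\<^sub>1 q\<^sub>2) (p\<^sub>2 q\<^sub>1)\<close>
  between such trinomials is an identity between products of linear forms in three
  variables, so all \<open>p\<close> or all \<open>q\<close> are proportional, forcing \<open>m \<le> a\<close> or \<open>m \<le> b\<close>.
\<close>

section \<open>Ideals of a commutative ring\<close>

lemma is_ideal_zero: "is_ideal I \<Longrightarrow> 0 \<in> I"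
  unfolding is_ideal_def by blast

lemma is_ideal_add: "is_ideal I \<Longrightarrow> a \<in> I \<Longrightarrow> b \<in> I \<Longrightarrow> a + b \<in> I"
  unfolding is_ideal_def by blast

lemma is_ideal_mult_left: "is_ideal I \<Longrightarrow> a \<in> I \<Longrightarrow> r * a \<in> I"
  unfolding is_ideal_def by blast

lemma is_ideal_mult_right: "is_ideal I \<Longrightarrow> a \<in> I \<Longrightarrow> a * r \<in> I"
  using is_ideal_mult_left[of I a r] by (simp add: mult.commute)

lemma is_ideal_eq_UNIV: "is_ideal I \<Longrightarrow> 1 \<in> I \<Longrightarrow> I = UNIV"
  using is_ideal_mult_right[of I 1] by auto

lemma ideal_gen_is_ideal: "is_ideal (ideal_gen S)"
  unfolding ideal_gen_def is_ideal_def by blast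

lemma ideal_gen_superset: "S \<subseteq> ideal_gen S"
  unfolding ideal_gen_def by blast

lemma ideal_gen_minimal: "is_ideal I \<Longrightarrow> S \<subseteq> I \<Longrightarrow> ideal_gen S \<subseteq> I"
  unfolding ideal_gen_def by blast

lemma ideal_gen_pair_subset: "ideal_gen {a, b} \<subseteq> {r * a + s * b | r s. True}"
proof (rule ideal_gen_minimal)
  show "is_ideal {r * a + s * b | r s. True}"
    unfolding is_ideal_def
  proof (intro conjI ballI allI)
    show "0 \<in> {r * a + s * b | r s. True}"
      by (rule CollectI, rule exI[of _ 0], rule exI[of _ 0]) simp
  next
    fix x y assume "x \<in> {r * a + s * b | r s. True}" "y \<in> {r * a + s * b | r s. True}"
    then obtain r s r' s' where "x = r * a + s * b" "y = r' * a + s' * b" by blast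
    then have "x + y = (r + r') * a + (s + s') * b" by (simp add: algebra_simps)
    then show "x + y \<in> {r * a + s * b | r s. True}" by blast
  next
    fix t x assume "x \<in> {r * a + s * b | r s. True}"
    then obtain r s where "x = r * a + s * b" by blast
    then have "t * x = (t * r) * a + (t * s) * b" by (simp add: algebra_simps)
    then show "t * x \<in> {r * a + s * b | r s. True}" by blast
  qed
  have "a = 1 * a + 0 * b" "b = 0 * a + 1 * b" by simp_all
  then show "{a, b} \<subseteq> {r * a + s * b | r s. True}" by blast
qed

lemma ideal_mult_is_ideal: "is_ideal (ideal_mult A B)"
  unfolding ideal_mult_def by (rule ideal_gen_is_ideal)

lemma mult_in_ideal_mult: "a \<in> A \<Longrightarrow> b \<in> B \<Longrightarrow> a * b \<in> ideal_mult A B"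
  unfolding ideal_mult_def by (rule subsetD[OF ideal_gen_superset]) blast

lemma ideal_mult_minimal:
  "is_ideal T \<Longrightarrow> (\<And>a b. a \<in> A \<Longrightarrow> b \<in> B \<Longrightarrow> a * b \<in> T) \<Longrightarrow> ideal_mult A B \<subseteq> T"
  unfolding ideal_mult_def by (rule ideal_gen_minimal) auto

lemma ideal_mult_subset_left: "is_ideal A \<Longrightarrow> ideal_mult A B \<subseteq> A"
  by (rule ideal_mult_minimal) (auto intro: is_ideal_mult_right)

lemma ideal_mult_commute: "ideal_mult A B = ideal_mult B A"
proof -
  have "{a * b | a b. a \<in> A \<and> b \<in> B} = {a * b | a b. a \<in> B \<and> b \<in> A}"
    by (metis (no_types, opaque_lifting) mult.commute)
  then show ?thesis unfolding ideal_mult_def by simp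
qed

lemma ideal_gen_square_pair:
  "ideal_gen {a * a, a * b, b * b} = ideal_mult (ideal_gen {a, b}) (ideal_gen {a, b})"
  (is "?I = ideal_mult ?J ?J")
proof
  have "a \<in> ?J" "b \<in> ?J" using ideal_gen_superset by blast+
  then have "{a * a, a * b, b * b} \<subseteq> ideal_mult ?J ?J"
    by (simp add: mult_in_ideal_mult)
  then show "?I \<subseteq> ideal_mult ?J ?J"
    by (rule ideal_gen_minimal[OF ideal_mult_is_ideal])
next
  show "ideal_mult ?J ?J \<subseteq> ?I"
  proof (rule ideal_mult_minimal[OF ideal_gen_is_ideal])
    fix f g assume "f \<in> ?J" "g \<in> ?J"
    then have "f \<in> {r * a + s * b | r s. True}" "g \<in> {r * a + s * b | r s. True}"
      using ideal_gen_pair_subset by blast+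
    then obtain r s r' s' where fg: "f = r * a + s * b" "g = r' * a + s' * b"
      by blast
    have "a * a \<in> ?I" "a * b \<in> ?I" "b * b \<in> ?I"
      using ideal_gen_superset[of "{a * a, a * b, b * b}"] by auto
    then have "(r * r') * (a * a) + (r * s' + s * r') * (a * b) + (s * s') * (b * b) \<in> ?I"
      using ideal_gen_is_ideal is_ideal_add is_ideal_mult_left by meson
    moreover have "f * g = (r * r') * (a * a) + (r * s' + s * r') * (a * b) + (s * s') * (b * b)"
      unfolding fg by (simp add: algebra_simps)
    ultimately show "f * g \<in> ?I" by simp
  qed
qed


section \<open>Monomials and coefficients\<close>

text \<open>\<open>HOL-Library.Poly_Mapping\<close> hides these two names.\<close>

abbreviation lookup :: "('a \<Rightarrow>\<^sub>0 'b::zero) \<Rightarrow> 'a \<Rightarrow> 'b" where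
  "lookup \<equiv> Poly_Mapping.lookup"

abbreviation keys :: "('a \<Rightarrow>\<^sub>0 'b::zero) \<Rightarrow> 'a set" where
  "keys \<equiv> Poly_Mapping.keys"

definition monomial_dvd :: "('n \<Rightarrow>\<^sub>0 nat) \<Rightarrow> ('n \<Rightarrow>\<^sub>0 nat) \<Rightarrow> bool" where
  "monomial_dvd \<mu> \<nu> \<longleftrightarrow> (\<forall>i. lookup \<mu> i \<le> lookup \<nu> i)"

lemma single_eq_0_iff [simp]: "Poly_Mapping.single \<mu> c = 0 \<longleftrightarrow> c = 0"
  by (metis lookup_single_eq lookup_zero single_zero)

lemma monomial_dvd_refl: "monomial_dvd \<mu> \<mu>"
  by (simp add: monomial_dvd_def)

lemma monomial_dvd_add: "monomial_dvd \<mu> (\<mu> + \<nu>)"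
  by (simp add: monomial_dvd_def lookup_add)

lemma monomial_dvd_add_left: "monomial_dvd \<mu> \<nu> \<Longrightarrow> monomial_dvd \<mu> (\<kappa> + \<nu>)"
  by (simp add: monomial_dvd_def lookup_add add_increasing)

lemma monomial_dvd_add_diff: "monomial_dvd \<mu> \<nu> \<Longrightarrow> \<mu> + (\<nu> - \<mu>) = \<nu>"
  by (rule poly_mapping_eqI) (simp add: monomial_dvd_def lookup_add lookup_minus)

lemma lookup_mult_monomial_dvd:
  fixes f g :: "('n \<Rightarrow>\<^sub>0 nat) \<Rightarrow>\<^sub>0 'a::comm_semiring_0"
  shows "lookup (f * g) \<nu> =
    (\<Sum>\<mu>. lookup f \<mu> * (if monomial_dvd \<mu> \<nu> then lookup g (\<nu> - \<mu>) else 0))"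
proof -
  have "(\<Sum>\<kappa>. lookup g \<kappa> when \<nu> = \<mu> + \<kappa>) = (if monomial_dvd \<mu> \<nu> then lookup g (\<nu> - \<mu>) else 0)"
    for \<mu>
  proof (cases "monomial_dvd \<mu> \<nu>")
    case True
    then have "\<nu> = \<mu> + \<kappa> \<longleftrightarrow> \<kappa> = \<nu> - \<mu>" for \<kappa>
      using monomial_dvd_add_diff by (metis add_diff_cancel_left')
    then show ?thesis using True by simp
  next
    case False
    then have "(lookup g \<kappa> when \<nu> = \<mu> + \<kappa>) = 0" for \<kappa>
      using monomial_dvd_add[of \<mu> \<kappa>] by (auto simp: when_def)
    then show ?thesis using False by simp
  qed
  then show ?thesis by (simp add: lookup_mult)
qed

lemma lookup_mult_unique_decomposition:
  fixes f g :: "('n \<Rightarrow>\<^sub>0 nat) \<Rightarrow>\<^sub>0 'a::comm_semiring_0"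
  assumes "\<And>\<alpha> \<beta>. \<alpha> \<in> keys f \<Longrightarrow> \<beta> \<in> keys g \<Longrightarrow> \<alpha> + \<beta> = \<nu> \<Longrightarrow> \<alpha> = \<mu>"
    and "\<mu> + \<mu>' = \<nu>"
  shows "lookup (f * g) \<nu> = lookup f \<mu> * lookup g \<mu>'"
proof -
  let ?t = "\<lambda>\<alpha>. lookup f \<alpha> * (if monomial_dvd \<alpha> \<nu> then lookup g (\<nu> - \<alpha>) else 0)"
  have "{\<alpha>. ?t \<alpha> \<noteq> 0} \<subseteq> {\<mu>}"
  proof
    fix \<alpha> assume "\<alpha> \<in> {\<alpha>. ?t \<alpha> \<noteq> 0}"
    then have "\<alpha> \<in> keys f" "\<nu> - \<alpha> \<in> keys g" "\<alpha> + (\<nu> - \<alpha>) = \<nu>"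
      using monomial_dvd_add_diff by (auto simp: in_keys_iff split: if_splits)
    then show "\<alpha> \<in> {\<mu>}" using assms(1) by blast
  qed
  then have "lookup (f * g) \<nu> = (\<Sum>\<alpha>\<in>{\<mu>}. ?t \<alpha>)"
    unfolding lookup_mult_monomial_dvd by (rule Sum_any.expand_superset[rotated]) simp
  then show ?thesis using assms(2) monomial_dvd_add[of \<mu> \<mu>'] by auto
qed

lemma lookup_mult_single_one:
  fixes f :: "('n \<Rightarrow>\<^sub>0 nat) \<Rightarrow>\<^sub>0 'a::comm_semiring_1"
  shows "lookup (f * Poly_Mapping.single \<mu> 1) \<nu> =
    (if monomial_dvd \<mu> \<nu> then lookup f (\<nu> - \<mu>) else 0)"
proof -
  have "{\<alpha>. lookup (Poly_Mapping.single \<mu> 1) \<alpha> *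
      (if monomial_dvd \<alpha> \<nu> then lookup f (\<nu> - \<alpha>) else 0) \<noteq> (0::'a)} \<subseteq> {\<mu>}"
    by (auto simp: lookup_single when_def)
  then have "lookup (Poly_Mapping.single \<mu> 1 * f) \<nu> = (\<Sum>\<alpha>\<in>{\<mu>}. lookup (Poly_Mapping.single \<mu> 1) \<alpha> *
      (if monomial_dvd \<alpha> \<nu> then lookup f (\<nu> - \<alpha>) else 0))"
    unfolding lookup_mult_monomial_dvd by (rule Sum_any.expand_superset[rotated]) simp
  moreover have "f * Poly_Mapping.single \<mu> 1 = Poly_Mapping.single \<mu> 1 * f"
    by (rule mult.commute)
  ultimately show ?thesis by simp
qed

lemma lookup_mult_single_one_add:
  fixes f :: "('n \<Rightarrow>\<^sub>0 nat) \<Rightarrow>\<^sub>0 'a::comm_semiring_1"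
  shows "lookup (f * Poly_Mapping.single \<mu> 1) (\<mu> + \<nu>) = lookup f \<nu>"
  unfolding lookup_mult_single_one using monomial_dvd_add[of \<mu> \<nu>] by simp

lemma mult_single_one_cancel:
  fixes f g :: "('n \<Rightarrow>\<^sub>0 nat) \<Rightarrow>\<^sub>0 'a::comm_semiring_1"
  assumes "f * Poly_Mapping.single \<mu> 1 = g * Poly_Mapping.single \<mu> 1"
  shows "f = g"
  by (rule poly_mapping_eqI) (metis assms lookup_mult_single_one_add)

lemma keys_monomial_dvd_imp_factor:
  fixes h :: "('n \<Rightarrow>\<^sub>0 nat) \<Rightarrow>\<^sub>0 'a::comm_semiring_1"
  assumes "\<forall>\<nu>\<in>keys h. monomial_dvd \<mu> \<nu>"
  obtains h' where "h = h' * Poly_Mapping.single \<mu> 1"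
proof -
  have "{\<nu>. lookup h (\<mu> + \<nu>) \<noteq> 0} \<subseteq> (\<lambda>\<nu>. \<nu> - \<mu>) ` keys h"
    by (force simp: in_keys_iff)
  then have fin: "finite {\<nu>. lookup h (\<mu> + \<nu>) \<noteq> 0}"
    by (rule finite_subset) simp
  define h' where "h' = Abs_poly_mapping (\<lambda>\<nu>. lookup h (\<mu> + \<nu>))"
  have "h = h' * Poly_Mapping.single \<mu> 1"
  proof (rule poly_mapping_eqI)
    fix \<nu>
    show "lookup h \<nu> = lookup (h' * Poly_Mapping.single \<mu> 1) \<nu>"
    proof (cases "monomial_dvd \<mu> \<nu>")
      case True
      then show ?thesis
        by (simp add: lookup_mult_single_one h'_def fin monomial_dvd_add_diff)
    next
      case False
      then show ?thesis
        using assms by (auto simp: lookup_mult_single_one in_keys_iff)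
    qed
  qed
  then show ?thesis by (rule that)
qed

lemma var_power: "(var X :: ('n, 'a::comm_ring_1) mpoly_ring) ^ k =
  Poly_Mapping.single (Poly_Mapping.single X k) 1"
  by (induction k) (simp_all add: var_def mult_single single_add[symmetric] add.commute)

lemma is_ideal_keys_upward_closed:
  assumes "\<And>\<mu> \<nu>. P \<nu> \<Longrightarrow> P (\<mu> + \<nu>)"
  shows "is_ideal {h :: ('n, 'a::comm_ring_1) mpoly_ring. \<forall>\<nu>\<in>keys h. P \<nu>}"
  unfolding is_ideal_def
proof (intro conjI ballI allI)
  fix f g :: "('n, 'a) mpoly_ring"
  assume "f \<in> {h. \<forall>\<nu>\<in>keys h. P \<nu>}" "g \<in> {h. \<forall>\<nu>\<in>keys h. P \<nu>}"
  then show "f + g \<in> {h. \<forall>\<nu>\<in>keys h. P \<nu>}"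
    using keys_add[of f g] by blast
next
  fix r h :: "('n, 'a) mpoly_ring"
  assume h: "h \<in> {h. \<forall>\<nu>\<in>keys h. P \<nu>}"
  have "P \<nu>" if \<nu>: "\<nu> \<in> keys (r * h)" for \<nu>
  proof -
    obtain \<alpha> \<beta> where "\<nu> = \<alpha> + \<beta>" "\<beta> \<in> keys h"
      using keys_mult[of r h] \<nu> by blast
    moreover have "P \<beta>" using h \<open>\<beta> \<in> keys h\<close> by blast
    ultimately show ?thesis by (simp add: assms)
  qed
  then show "r * h \<in> {h. \<forall>\<nu>\<in>keys h. P \<nu>}" by blast
qed simp

lemma keys_of_monomial_ideal:
  fixes h :: "('n, 'a::comm_ring_1) mpoly_ring"
  assumes "h \<in> ideal_gen ((\<lambda>\<mu>. Poly_Mapping.single \<mu> 1) ` E)" "\<nu> \<in> keys h"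
  shows "\<exists>\<mu>\<in>E. monomial_dvd \<mu> \<nu>"
proof -
  let ?T = "{h :: ('n, 'a) mpoly_ring. \<forall>\<nu>\<in>keys h. \<exists>\<mu>\<in>E. monomial_dvd \<mu> \<nu>}"
  have "is_ideal ?T"
    by (rule is_ideal_keys_upward_closed) (meson monomial_dvd_add_left)
  moreover have "(\<lambda>\<mu>. Poly_Mapping.single \<mu> 1) ` E \<subseteq> ?T"
    using monomial_dvd_refl by fastforce
  ultimately have "ideal_gen ((\<lambda>\<mu>. Poly_Mapping.single \<mu> 1) ` E) \<subseteq> ?T"
    by (rule ideal_gen_minimal)
  then show ?thesis using assms by blast
qed

lemma in_monomial_ideal:
  fixes h :: "('n, 'a::comm_ring_1) mpoly_ring"
  assumes "\<mu> \<in> E" "\<forall>\<nu>\<in>keys h. monomial_dvd \<mu> \<nu>"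
  shows "h \<in> ideal_gen ((\<lambda>\<mu>. Poly_Mapping.single \<mu> 1) ` E)"
proof -
  obtain h' where "h = h' * Poly_Mapping.single \<mu> 1"
    using keys_monomial_dvd_imp_factor[OF assms(2)] .
  moreover have "Poly_Mapping.single \<mu> 1 \<in> ideal_gen ((\<lambda>\<mu>. Poly_Mapping.single \<mu> (1::'a)) ` E)"
    using assms(1) ideal_gen_superset[of "(\<lambda>\<mu>. Poly_Mapping.single \<mu> (1::'a)) ` E"] by blast
  ultimately show ?thesis
    using is_ideal_mult_left[OF ideal_gen_is_ideal] by metis
qed


section \<open>Total degree and a graded monomial order\<close>

definition deg_pm :: "('n::finite \<Rightarrow>\<^sub>0 nat) \<Rightarrow> nat" where
  "deg_pm \<mu> = (\<Sum>i\<in>UNIV. lookup \<mu> i)"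

lemma deg_pm_add: "deg_pm (\<mu> + \<nu>) = deg_pm \<mu> + deg_pm \<nu>"
  unfolding deg_pm_def by (simp add: lookup_add sum.distrib)

lemma deg_pm_eq_0_iff: "deg_pm \<mu> = 0 \<longleftrightarrow> \<mu> = 0"
  unfolding deg_pm_def by (auto intro: poly_mapping_eqI)

lemma deg_pm_zero [simp]: "deg_pm 0 = 0"
  by (simp add: deg_pm_eq_0_iff)

lemma deg_pm_single [simp]: "deg_pm (Poly_Mapping.single i k) = k"
proof -
  have "deg_pm (Poly_Mapping.single i k) = (\<Sum>i'\<in>UNIV. if i' = i then k else 0)"
    unfolding deg_pm_def by (rule sum.cong) (auto simp: lookup_single when_def)
  then show ?thesis by simp
qed

lemma deg_pm_mono: "monomial_dvd \<mu> \<nu> \<Longrightarrow> deg_pm \<mu> \<le> deg_pm \<nu>"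
  unfolding deg_pm_def monomial_dvd_def by (rule sum_mono) simp

lemma deg_pm_diff: "monomial_dvd \<mu> \<nu> \<Longrightarrow> deg_pm (\<nu> - \<mu>) = deg_pm \<nu> - deg_pm \<mu>"
  using monomial_dvd_add_diff[of \<mu> \<nu>] deg_pm_add[of \<mu> "\<nu> - \<mu>"] by simp

lemma monomial_dvd_deg_pm_eq: "monomial_dvd \<mu> \<nu> \<Longrightarrow> deg_pm \<mu> = deg_pm \<nu> \<Longrightarrow> \<mu> = \<nu>"
  using monomial_dvd_add_diff[of \<mu> \<nu>] deg_pm_diff[of \<mu> \<nu>] deg_pm_eq_0_iff[of "\<nu> - \<mu>"]
  by simp

text \<open>The lexicographic order of \<^typ>\<open>nat \<Rightarrow>\<^sub>0 nat\<close> pulled back along this injective additive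
  map is a monomial order that refines the total degree.\<close>

definition grlex_key :: "('n::finite \<Rightarrow>\<^sub>0 nat) \<Rightarrow> (nat \<Rightarrow>\<^sub>0 nat)" where
  "grlex_key \<mu> = Poly_Mapping.single 0 (deg_pm \<mu>) +
     (\<Sum>i\<in>UNIV. Poly_Mapping.single (Suc (to_nat i)) (lookup \<mu> i))"

lemma grlex_key_add: "grlex_key (\<mu> + \<nu>) = grlex_key \<mu> + grlex_key \<nu>"
  unfolding grlex_key_def deg_pm_add lookup_add single_add sum.distrib by (simp only: add_ac)

lemma inj_grlex_key: "inj (grlex_key :: ('n::finite \<Rightarrow>\<^sub>0 nat) \<Rightarrow> _)"
proof (rule injI)
  fix \<mu> \<nu> :: "'n \<Rightarrow>\<^sub>0 nat"
  have lookup_Suc: "lookup (grlex_key \<kappa>) (Suc (to_nat i)) = lookup \<kappa> i" for \<kappa> and i :: 'n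
  proof -
    have "lookup (grlex_key \<kappa>) (Suc (to_nat i)) = (\<Sum>i'\<in>UNIV. if i' = i then lookup \<kappa> i' else 0)"
      unfolding grlex_key_def by (simp add: lookup_add lookup_sum lookup_single when_def)
    then show ?thesis by simp
  qed
  assume "grlex_key \<mu> = grlex_key \<nu>"
  then show "\<mu> = \<nu>" by (metis lookup_Suc poly_mapping_eqI)
qed

lemma grlex_key_less_if_deg_pm_less: "deg_pm \<mu> < deg_pm \<nu> \<Longrightarrow> grlex_key \<mu> < grlex_key \<nu>"
  unfolding less_poly_mapping.rep_eq less_fun_def
  by (rule exI[of _ 0]) (simp add: grlex_key_def lookup_add lookup_sum lookup_single)

definition is_least_key :: "('n::finite, 'a::zero) mpoly_ring \<Rightarrow> ('n \<Rightarrow>\<^sub>0 nat) \<Rightarrow> bool" where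
  "is_least_key f \<mu> \<longleftrightarrow> \<mu> \<in> keys f \<and> (\<forall>\<nu>\<in>keys f. grlex_key \<mu> \<le> grlex_key \<nu>)"

lemma least_key_exists: "f \<noteq> 0 \<Longrightarrow> \<exists>\<mu>. is_least_key f \<mu>"
proof -
  assume "f \<noteq> 0"
  then have "Min (grlex_key ` keys f) \<in> grlex_key ` keys f" by (intro Min_in) simp_all
  then obtain \<mu> where "\<mu> \<in> keys f" "grlex_key \<mu> = Min (grlex_key ` keys f)" by (metis imageE)
  then show ?thesis unfolding is_least_key_def by (auto intro: Min_le)
qed

lemma is_least_key_deg_pm_le:
  assumes "is_least_key f \<mu>" "\<nu> \<in> keys f"
  shows "deg_pm \<mu> \<le> deg_pm \<nu>"
proof (rule ccontr)
  assume "\<not> deg_pm \<mu> \<le> deg_pm \<nu>"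
  then have "grlex_key \<nu> < grlex_key \<mu>" by (intro grlex_key_less_if_deg_pm_less) simp
  moreover have "grlex_key \<mu> \<le> grlex_key \<nu>" using assms unfolding is_least_key_def by simp
  ultimately show False by simp
qed

lemma least_key_mult:
  fixes f g :: "('n::finite, 'a::idom) mpoly_ring"
  assumes \<mu>: "is_least_key f \<mu>" and \<nu>: "is_least_key g \<nu>"
  shows "\<mu> + \<nu> \<in> keys (f * g)"
proof -
  have "lookup (f * g) (\<mu> + \<nu>) = lookup f \<mu> * lookup g \<nu>"
  proof (rule lookup_mult_unique_decomposition)
    fix \<alpha> \<beta> assume "\<alpha> \<in> keys f" "\<beta> \<in> keys g" "\<alpha> + \<beta> = \<mu> + \<nu>"
    then have le: "grlex_key \<mu> \<le> grlex_key \<alpha>" "grlex_key \<nu> \<le> grlex_key \<beta>"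
      and sum: "grlex_key \<alpha> + grlex_key \<beta> = grlex_key \<mu> + grlex_key \<nu>"
      using \<mu> \<nu> unfolding is_least_key_def by (auto simp flip: grlex_key_add)
    have "grlex_key \<alpha> = grlex_key \<mu>"
    proof (rule ccontr)
      assume "grlex_key \<alpha> \<noteq> grlex_key \<mu>"
      then have "grlex_key \<mu> + grlex_key \<nu> < grlex_key \<alpha> + grlex_key \<beta>"
        using le by (intro add_less_le_mono) simp_all
      then show False using sum by simp
    qed
    then show "\<alpha> = \<mu>" by (rule injD[OF inj_grlex_key])
  qed simp
  also have "\<dots> \<noteq> 0" using \<mu> \<nu> unfolding is_least_key_def by (simp add: in_keys_iff)
  finally show ?thesis by (simp add: in_keys_iff)
qed

lemma obtain_lowest_degree_key:
  fixes A :: "('n::finite, 'a::zero) mpoly_ring set"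
  assumes "f \<in> A" "f \<noteq> 0"
  obtains g \<mu> where "g \<in> A" "is_least_key g \<mu>" "\<forall>h\<in>A. \<forall>\<nu>\<in>keys h. deg_pm \<mu> \<le> deg_pm \<nu>"
proof -
  obtain \<nu> where "\<nu> \<in> keys f" using assms(2) by (metis all_not_in_conv keys_eq_empty)
  then have "\<exists>\<nu>'. (\<exists>g\<in>A. \<nu>' \<in> keys g) \<and>
      (\<forall>\<nu>. (\<exists>h\<in>A. \<nu> \<in> keys h) \<longrightarrow> deg_pm \<nu>' \<le> deg_pm \<nu>)"
    using assms(1) by (intro ex_has_least_nat) auto
  then obtain g \<nu>' where g: "g \<in> A" "\<nu>' \<in> keys g"
    and low: "\<And>h \<nu>. h \<in> A \<Longrightarrow> \<nu> \<in> keys h \<Longrightarrow> deg_pm \<nu>' \<le> deg_pm \<nu>"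
    by auto
  have "g \<noteq> 0" using g(2) by auto
  then obtain \<mu> where \<mu>: "is_least_key g \<mu>" using least_key_exists by auto
  have "deg_pm \<mu> \<le> deg_pm \<nu>'" using \<mu> g(2) by (rule is_least_key_deg_pm_le)
  then have "\<forall>h\<in>A. \<forall>\<nu>\<in>keys h. deg_pm \<mu> \<le> deg_pm \<nu>" using low by (meson le_trans)
  then show ?thesis by (rule that[OF g(1) \<mu>])
qed

lemma keys_disjoint_if_mult_keys_disjoint:
  fixes f g :: "('n::finite, 'a::idom) mpoly_ring"
  assumes f0: "lookup f 0 \<noteq> 0"
    and down: "\<And>\<mu> \<nu>. \<nu> \<in> S \<Longrightarrow> monomial_dvd \<mu> \<nu> \<Longrightarrow> \<mu> \<in> S"
    and fg: "keys (f * g) \<inter> S = {}"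
  shows "keys g \<inter> S = {}"
proof (rule ccontr)
  assume "keys g \<inter> S \<noteq> {}"
  then obtain \<mu> where \<mu>: "\<mu> \<in> keys g \<inter> S"
    and least: "\<And>\<nu>. \<nu> \<in> keys g \<inter> S \<Longrightarrow> deg_pm \<mu> \<le> deg_pm \<nu>"
    using ex_has_least_nat[of "\<lambda>\<nu>. \<nu> \<in> keys g \<inter> S" _ deg_pm] by auto
  have "lookup (f * g) (0 + \<mu>) = lookup f 0 * lookup g \<mu>"
  proof (rule lookup_mult_unique_decomposition)
    fix \<alpha> \<beta> assume \<alpha>\<beta>: "\<alpha> \<in> keys f" "\<beta> \<in> keys g" "\<alpha> + \<beta> = 0 + \<mu>"
    then have "monomial_dvd \<beta> \<mu>" using monomial_dvd_add[of \<beta> \<alpha>] by (simp add: add.commute)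
    then have "\<beta> \<in> keys g \<inter> S" using down \<mu> \<alpha>\<beta>(2) by auto
    then have "deg_pm \<mu> \<le> deg_pm \<beta>" by (rule least)
    then have "deg_pm \<alpha> = 0" using \<alpha>\<beta>(3) deg_pm_add[of \<alpha> \<beta>] by simp
    then show "\<alpha> = 0" by (simp add: deg_pm_eq_0_iff)
  qed simp
  then have "\<mu> \<in> keys (f * g)" using f0 \<mu> by (simp add: in_keys_iff)
  then show False using fg \<mu> by auto
qed


section \<open>Setting a variable to zero\<close>

definition subst_zero :: "'n \<Rightarrow> ('n, 'a::zero) mpoly_ring \<Rightarrow> ('n, 'a) mpoly_ring" where
  "subst_zero Y h = Abs_poly_mapping (\<lambda>\<mu>. if lookup \<mu> Y = 0 then lookup h \<mu> else 0)"

lemma lookup_subst_zero: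
  "lookup (subst_zero Y h) \<mu> = (if lookup \<mu> Y = 0 then lookup h \<mu> else 0)"
proof -
  have "finite {\<mu>. (if lookup \<mu> Y = 0 then lookup h \<mu> else 0) \<noteq> 0}"
    by (rule finite_subset[of _ "keys h"]) (auto simp: in_keys_iff)
  then show ?thesis unfolding subst_zero_def by simp
qed

lemma subst_zero_0 [simp]: "subst_zero Y 0 = 0"
  by (rule poly_mapping_eqI) (simp add: lookup_subst_zero)

lemma subst_zero_add: "subst_zero Y (f + g) = subst_zero Y f + subst_zero Y g"
  by (rule poly_mapping_eqI) (simp add: lookup_subst_zero lookup_add)

lemma subst_zero_diff:
  fixes f g :: "('n, 'a::ab_group_add) mpoly_ring"
  shows "subst_zero Y (f - g) = subst_zero Y f - subst_zero Y g"
  by (rule poly_mapping_eqI) (simp add: lookup_subst_zero lookup_minus)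

lemma subst_zero_mult:
  fixes f g :: "('n, 'a::comm_semiring_0) mpoly_ring"
  shows "subst_zero Y (f * g) = subst_zero Y f * subst_zero Y g"
proof (rule poly_mapping_eqI)
  fix \<nu>
  show "lookup (subst_zero Y (f * g)) \<nu> = lookup (subst_zero Y f * subst_zero Y g) \<nu>"
  proof (cases "lookup \<nu> Y = 0")
    case True
    then have "lookup f \<mu> * (if monomial_dvd \<mu> \<nu> then lookup g (\<nu> - \<mu>) else 0) =
        lookup (subst_zero Y f) \<mu> *
          (if monomial_dvd \<mu> \<nu> then lookup (subst_zero Y g) (\<nu> - \<mu>) else 0)" for \<mu>
      by (auto simp: lookup_subst_zero monomial_dvd_def lookup_minus) (metis le_zero_eq not_gr0)
    then show ?thesis using True by (simp add: lookup_subst_zero lookup_mult_monomial_dvd)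
  next
    case False
    then have "lookup (subst_zero Y f) \<mu> *
        (if monomial_dvd \<mu> \<nu> then lookup (subst_zero Y g) (\<nu> - \<mu>) else 0) = 0" for \<mu>
      by (auto simp: lookup_subst_zero monomial_dvd_def lookup_minus)
    then show ?thesis using False by (simp add: lookup_subst_zero lookup_mult_monomial_dvd)
  qed
qed

lemma subst_zero_single:
  "lookup \<mu> Y = 0 \<Longrightarrow> subst_zero Y (Poly_Mapping.single \<mu> c) = Poly_Mapping.single \<mu> c"
  by (rule poly_mapping_eqI) (auto simp: lookup_subst_zero lookup_single when_def)

lemma subst_zero_one: "subst_zero Y (1 :: ('n, 'a::zero_neq_one) mpoly_ring) = 1"
  by (rule poly_mapping_eqI) (simp add: lookup_subst_zero lookup_one when_def)

lemma subst_zero_idem: "subst_zero Y (subst_zero Y h) = subst_zero Y h"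
  by (rule poly_mapping_eqI) (simp add: lookup_subst_zero)

lemma keys_power_if_subst_zero_eq_0:
  fixes c :: "('n, 'a::comm_semiring_1) mpoly_ring"
  assumes "subst_zero Y c = 0" "\<mu> \<in> keys (c ^ n)"
  shows "n \<le> lookup \<mu> Y"
  using assms(2)
proof (induction n arbitrary: \<mu>)
  case (Suc n)
  obtain \<alpha> \<beta> where \<mu>: "\<mu> = \<alpha> + \<beta>" "\<alpha> \<in> keys c" "\<beta> \<in> keys (c ^ n)"
    using keys_mult[of c "c ^ n"] Suc.prems by auto
  have "lookup (subst_zero Y c) \<alpha> = 0" using assms(1) by simp
  then have "lookup \<alpha> Y \<noteq> 0"
    using \<mu>(2) by (auto simp: lookup_subst_zero in_keys_iff split: if_splits)
  then show ?case using Suc.IH[OF \<mu>(3)] \<mu>(1) by (simp add: lookup_add)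
qed simp

lemma ideal_mult_subst_zero_factor:
  fixes A B :: "('n, 'a::comm_ring_1) mpoly_ring set"
  assumes A: "is_ideal A" and h: "h \<in> ideal_mult A B"
    and B: "\<And>g. g \<in> B \<Longrightarrow> \<exists>g'. subst_zero Y g = g' * e" and e: "subst_zero Y e = e"
  shows "\<exists>\<alpha>\<in>A. subst_zero Y h = subst_zero Y \<alpha> * e"
proof -
  let ?T = "{h. \<exists>\<alpha>\<in>A. subst_zero Y h = subst_zero Y \<alpha> * e}"
  have "is_ideal ?T"
    unfolding is_ideal_def
  proof (intro conjI ballI allI)
    have "subst_zero Y 0 = subst_zero Y 0 * e" by simp
    then show "0 \<in> ?T" using is_ideal_zero[OF A] by blast
  next
    fix f g assume "f \<in> ?T" "g \<in> ?T"
    then obtain \<alpha> \<beta> where "\<alpha> \<in> A" "subst_zero Y f = subst_zero Y \<alpha> * e"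
      "\<beta> \<in> A" "subst_zero Y g = subst_zero Y \<beta> * e"
      by auto
    then have "\<alpha> + \<beta> \<in> A" "subst_zero Y (f + g) = subst_zero Y (\<alpha> + \<beta>) * e"
      by (simp_all add: is_ideal_add[OF A] subst_zero_add distrib_right)
    then show "f + g \<in> ?T" by auto
  next
    fix r f assume "f \<in> ?T"
    then obtain \<alpha> where "\<alpha> \<in> A" "subst_zero Y f = subst_zero Y \<alpha> * e" by auto
    then have "r * \<alpha> \<in> A" "subst_zero Y (r * f) = subst_zero Y (r * \<alpha>) * e"
      by (simp_all add: is_ideal_mult_left[OF A] subst_zero_mult mult.assoc)
    then show "r * f \<in> ?T" by auto
  qed
  moreover have "f * g \<in> ?T" if f: "f \<in> A" and g: "g \<in> B" for f g
  proof -
    obtain g' where g': "subst_zero Y g = g' * e" using B[OF g] by auto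
    have "subst_zero Y (f * g) = subst_zero Y f * subst_zero Y (subst_zero Y g)"
      by (simp add: subst_zero_mult subst_zero_idem)
    also have "\<dots> = subst_zero Y (f * g') * e"
      unfolding g' by (simp add: subst_zero_mult e mult.assoc)
    finally show ?thesis using is_ideal_mult_right[OF A f] by auto
  qed
  ultimately have "ideal_mult A B \<subseteq> ?T" by (rule ideal_mult_minimal)
  then show ?thesis using h by auto
qed


section \<open>Products of trinomials\<close>

definition poly_supported_in :: "nat set \<Rightarrow> 'a::zero poly \<Rightarrow> bool" where
  "poly_supported_in S p \<longleftrightarrow> (\<forall>k. k \<notin> S \<longrightarrow> coeff p k = 0)"

definition trinomial :: "nat \<Rightarrow> nat \<Rightarrow> 'a::comm_ring_1 \<Rightarrow> 'a \<Rightarrow> 'a \<Rightarrow> 'a poly" where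
  "trinomial j m a0 a1 a2 = monom a0 0 + monom a1 j + monom a2 m"

lemma trinomial_if_supported:
  assumes "0 < j" "j < m" "poly_supported_in {0, j, m} p"
  shows "\<exists>a0 a1 a2. p = trinomial j m a0 a1 a2"
proof -
  have "p = trinomial j m (coeff p 0) (coeff p j) (coeff p m)"
  proof (rule poly_eqI)
    fix k
    show "coeff p k = coeff (trinomial j m (coeff p 0) (coeff p j) (coeff p m)) k"
      using assms unfolding poly_supported_in_def trinomial_def
      by (cases "k = 0"; cases "k = j"; cases "k = m") (auto simp: coeff_monom)
  qed
  then show ?thesis by blast
qed

lemma trinomial_eq_0_iff: "0 < j \<Longrightarrow> j < m \<Longrightarrow>
  trinomial j m a0 a1 a2 = 0 \<longleftrightarrow> a0 = 0 \<and> a1 = 0 \<and> a2 = 0"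
  unfolding trinomial_def by (auto simp: poly_eq_iff coeff_monom split: if_splits)

lemma smult_trinomial: "smult d (trinomial j m a0 a1 a2) = trinomial j m (d * a0) (d * a1) (d * a2)"
  unfolding trinomial_def by (simp add: smult_add_right smult_monom)

text \<open>When \<open>m \<noteq> 2 j\<close> the six exponents \<open>0, j, m, 2 j, j + m, 2 m\<close> are distinct, so an identity
  between products of trinomials is the identity between the products of the linear forms
  \<open>a0 p0 + a1 p1 + a2 p2\<close> with the same coefficients.\<close>

lemma trinomial_mult_eq_imp_coeffs:
  fixes x0 x1 x2 y0 y1 y2 z0 z1 z2 w0 w1 w2 :: "'a::comm_ring_1"
  assumes jm: "0 < j" "j < m" "m \<noteq> 2 * j"
    and eq: "trinomial j m x0 x1 x2 * trinomial j m y0 y1 y2 =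
      trinomial j m z0 z1 z2 * trinomial j m w0 w1 w2"
  shows "x0 * y0 = z0 * w0" "x0 * y1 + x1 * y0 = z0 * w1 + z1 * w0"
    "x0 * y2 + x2 * y0 = z0 * w2 + z2 * w0" "x1 * y1 = z1 * w1"
    "x1 * y2 + x2 * y1 = z1 * w2 + z2 * w1" "x2 * y2 = z2 * w2"
proof -
  have expand: "trinomial j m a0 a1 a2 * trinomial j m b0 b1 b2 =
    monom (a0 * b0) 0 + monom (a0 * b1 + a1 * b0) j + monom (a0 * b2 + a2 * b0) m +
    monom (a1 * b1) (j + j) + monom (a1 * b2 + a2 * b1) (j + m) + monom (a2 * b2) (m + m)"
    for a0 a1 a2 b0 b1 b2 :: 'a
    unfolding trinomial_def by (simp add: algebra_simps mult_monom flip: add_monom)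
  have distinct: "j \<noteq> 0" "m \<noteq> 0" "j \<noteq> m" "j + j \<noteq> m" "j + m \<noteq> m + m" "j + j \<noteq> j + m"
    "j + j \<noteq> m + m" "j + m \<noteq> j" "m + m \<noteq> m" "j + j \<noteq> j" "j + m \<noteq> m" "m + m \<noteq> j"
    using jm by auto
  have "coeff (trinomial j m x0 x1 x2 * trinomial j m y0 y1 y2) k =
      coeff (trinomial j m z0 z1 z2 * trinomial j m w0 w1 w2) k" for k
    using eq by simp
  note coeffs = this[unfolded expand, simplified coeff_add coeff_monom]
  show "x0 * y0 = z0 * w0" using coeffs[of 0] distinct by simp
  show "x0 * y1 + x1 * y0 = z0 * w1 + z1 * w0" using coeffs[of j] distinct by simp
  show "x0 * y2 + x2 * y0 = z0 * w2 + z2 * w0" using coeffs[of m] distinct by simp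
  show "x1 * y1 = z1 * w1" using coeffs[of "j + j"] distinct by simp
  show "x1 * y2 + x2 * y1 = z1 * w2 + z2 * w1" using coeffs[of "j + m"] distinct by simp
  show "x2 * y2 = z2 * w2" using coeffs[of "m + m"] distinct by simp
qed

definition lin_form :: "'a::idom \<Rightarrow> 'a \<Rightarrow> 'a \<Rightarrow> 'a \<Rightarrow> 'a \<Rightarrow> 'a \<Rightarrow> 'a" where
  "lin_form x0 x1 x2 p0 p1 p2 = x0 * p0 + x1 * p1 + x2 * p2"

definition parallel3 :: "'a::idom \<Rightarrow> 'a \<Rightarrow> 'a \<Rightarrow> 'a \<Rightarrow> 'a \<Rightarrow> 'a \<Rightarrow> bool" where
  "parallel3 x0 x1 x2 z0 z1 z2 \<longleftrightarrow> x1 * z2 = x2 * z1 \<and> x0 * z2 = x2 * z0 \<and> x0 * z1 = x1 * z0"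

lemma separating_point_if_not_parallel3:
  assumes "\<not> parallel3 x0 x1 x2 z0 z1 z2"
  shows "\<exists>p0 p1 p2. lin_form x0 x1 x2 p0 p1 p2 = 0 \<and> lin_form z0 z1 z2 p0 p1 p2 \<noteq> 0"
proof -
  consider "x1 * z2 \<noteq> x2 * z1" | "x0 * z2 \<noteq> x2 * z0" | "x0 * z1 \<noteq> x1 * z0"
    using assms unfolding parallel3_def by blast
  then show ?thesis
  proof cases
    case 1
    have "lin_form x0 x1 x2 0 x2 (- x1) = 0" "lin_form z0 z1 z2 0 x2 (- x1) \<noteq> 0"
      using 1 unfolding lin_form_def by (simp_all add: algebra_simps)
    then show ?thesis by blast
  next
    case 2
    have "lin_form x0 x1 x2 x2 0 (- x0) = 0" "lin_form z0 z1 z2 x2 0 (- x0) \<noteq> 0"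
      using 2 unfolding lin_form_def by (simp_all add: algebra_simps)
    then show ?thesis by blast
  next
    case 3
    have "lin_form x0 x1 x2 x1 (- x0) 0 = 0" "lin_form z0 z1 z2 x1 (- x0) 0 \<noteq> 0"
      using 3 unfolding lin_form_def by (simp_all add: algebra_simps)
    then show ?thesis by blast
  qed
qed

text \<open>Over a domain, a factor of a product of two linear forms is proportional to one of
  the factors: otherwise points \<open>p\<close>, \<open>q\<close> on the zero set of the first form off those of the
  other two give a point \<open>p + q\<close> on which exactly one side of the identity vanishes.\<close>

lemma parallel3_of_product_eq:
  fixes x0 x1 x2 y0 y1 y2 z0 z1 z2 w0 w1 w2 :: "'a::idom"
  assumes e0: "x0 * y0 = z0 * w0"
    and e1: "x0 * y1 + x1 * y0 = z0 * w1 + z1 * w0"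
    and e2: "x0 * y2 + x2 * y0 = z0 * w2 + z2 * w0"
    and e3: "x1 * y1 = z1 * w1"
    and e4: "x1 * y2 + x2 * y1 = z1 * w2 + z2 * w1"
    and e5: "x2 * y2 = z2 * w2"
  shows "parallel3 x0 x1 x2 z0 z1 z2 \<or> parallel3 x0 x1 x2 w0 w1 w2"
proof (rule ccontr)
  assume "\<not> ?thesis"
  then have n1: "\<not> parallel3 x0 x1 x2 z0 z1 z2" and n2: "\<not> parallel3 x0 x1 x2 w0 w1 w2" by auto
  have ident: "lin_form x0 x1 x2 p0 p1 p2 * lin_form y0 y1 y2 p0 p1 p2 =
      lin_form z0 z1 z2 p0 p1 p2 * lin_form w0 w1 w2 p0 p1 p2"
    for p0 p1 p2
  proof -
    have "lin_form x0 x1 x2 p0 p1 p2 * lin_form y0 y1 y2 p0 p1 p2 =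
      (x0 * y0) * (p0 * p0) + (x0 * y1 + x1 * y0) * (p0 * p1)
      + (x0 * y2 + x2 * y0) * (p0 * p2) + (x1 * y1) * (p1 * p1)
      + (x1 * y2 + x2 * y1) * (p1 * p2) + (x2 * y2) * (p2 * p2)"
      unfolding lin_form_def by (simp add: algebra_simps)
    also have "\<dots> = (z0 * w0) * (p0 * p0) + (z0 * w1 + z1 * w0) * (p0 * p1)
      + (z0 * w2 + z2 * w0) * (p0 * p2) + (z1 * w1) * (p1 * p1)
      + (z1 * w2 + z2 * w1) * (p1 * p2) + (z2 * w2) * (p2 * p2)"
      unfolding e0 e1 e2 e3 e4 e5 ..
    also have "\<dots> = lin_form z0 z1 z2 p0 p1 p2 * lin_form w0 w1 w2 p0 p1 p2"
      unfolding lin_form_def by (simp add: algebra_simps)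
    finally show ?thesis .
  qed
  obtain p0 p1 p2 where p: "lin_form x0 x1 x2 p0 p1 p2 = 0" "lin_form z0 z1 z2 p0 p1 p2 \<noteq> 0"
    using separating_point_if_not_parallel3[OF n1] by blast
  obtain q0 q1 q2 where q: "lin_form x0 x1 x2 q0 q1 q2 = 0" "lin_form w0 w1 w2 q0 q1 q2 \<noteq> 0"
    using separating_point_if_not_parallel3[OF n2] by blast
  have pw: "lin_form w0 w1 w2 p0 p1 p2 = 0" using ident[of p0 p1 p2] p by simp
  have qz: "lin_form z0 z1 z2 q0 q1 q2 = 0" using ident[of q0 q1 q2] q by simp
  have lin: "lin_form a0 a1 a2 (p0 + q0) (p1 + q1) (p2 + q2) =
      lin_form a0 a1 a2 p0 p1 p2 + lin_form a0 a1 a2 q0 q1 q2" for a0 a1 a2 :: 'a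
    unfolding lin_form_def by (simp add: algebra_simps)
  have "lin_form x0 x1 x2 (p0 + q0) (p1 + q1) (p2 + q2) = 0" using p q lin by simp
  moreover have "lin_form z0 z1 z2 (p0 + q0) (p1 + q1) (p2 + q2) \<noteq> 0" using p qz lin by simp
  moreover have "lin_form w0 w1 w2 (p0 + q0) (p1 + q1) (p2 + q2) \<noteq> 0" using q pw lin by simp
  ultimately show False using ident[of "p0 + q0" "p1 + q1" "p2 + q2"] by simp
qed

lemma parallel3_smult:
  assumes "parallel3 x0 x1 x2 z0 z1 z2" "z0 \<noteq> 0 \<or> z1 \<noteq> 0 \<or> z2 \<noteq> 0"
  shows "\<exists>c d. d \<noteq> 0 \<and> d * x0 = c * z0 \<and> d * x1 = c * z1 \<and> d * x2 = c * z2"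
proof -
  consider "z0 \<noteq> 0" | "z1 \<noteq> 0" | "z2 \<noteq> 0" using assms(2) by blast
  then show ?thesis
  proof cases
    case 1
    then show ?thesis using assms(1) unfolding parallel3_def
      by (intro exI[of _ x0] exI[of _ z0]) (simp add: algebra_simps)
  next
    case 2
    then show ?thesis using assms(1) unfolding parallel3_def
      by (intro exI[of _ x1] exI[of _ z1]) (simp add: algebra_simps)
  next
    case 3
    then show ?thesis using assms(1) unfolding parallel3_def
      by (intro exI[of _ x2] exI[of _ z2]) (simp add: algebra_simps)
  qed
qed

definition proportional :: "'a::idom poly \<Rightarrow> 'a poly \<Rightarrow> bool" where
  "proportional u v \<longleftrightarrow> (\<exists>c d. d \<noteq> 0 \<and> smult d u = smult c v)"

lemma proportional_if_parallel3:
  fixes u v v' :: "'a::idom poly"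
  assumes jm: "0 < j" "j < m"
    and x: "u * v = trinomial j m x0 x1 x2" and z: "u * v' = trinomial j m z0 z1 z2"
    and par: "parallel3 x0 x1 x2 z0 z1 z2" and nz: "u \<noteq> 0" "v' \<noteq> 0"
  shows "proportional v v'"
proof -
  have "z0 \<noteq> 0 \<or> z1 \<noteq> 0 \<or> z2 \<noteq> 0"
    using z nz trinomial_eq_0_iff[OF jm, of z0 z1 z2] by auto
  then obtain c d where cd: "d \<noteq> 0" "d * x0 = c * z0" "d * x1 = c * z1" "d * x2 = c * z2"
    using parallel3_smult[OF par] by blast
  have "smult d (u * v) = smult c (u * v')"
    unfolding x z smult_trinomial cd ..
  then have "u * (smult d v - smult c v') = 0" by (simp add: algebra_simps)
  then have "smult d v = smult c v'" using nz(1) by simp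
  then show ?thesis using cd(1) unfolding proportional_def by blast
qed

lemma proportional_of_trinomial_products:
  fixes u1 u2 v1 v2 :: "'a::idom poly"
  assumes jm: "0 < j" "j < m" "m \<noteq> 2 * j"
    and nz: "u1 \<noteq> 0" "u2 \<noteq> 0" "v1 \<noteq> 0" "v2 \<noteq> 0"
    and supp: "poly_supported_in {0, j, m} (u1 * v1)" "poly_supported_in {0, j, m} (u2 * v2)"
      "poly_supported_in {0, j, m} (u1 * v2)" "poly_supported_in {0, j, m} (u2 * v1)"
  shows "proportional u1 u2 \<or> proportional v1 v2"
proof -
  obtain x0 x1 x2 where x: "u1 * v1 = trinomial j m x0 x1 x2"
    using trinomial_if_supported[OF jm(1,2) supp(1)] by blast
  obtain y0 y1 y2 where y: "u2 * v2 = trinomial j m y0 y1 y2"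
    using trinomial_if_supported[OF jm(1,2) supp(2)] by blast
  obtain z0 z1 z2 where z: "u1 * v2 = trinomial j m z0 z1 z2"
    using trinomial_if_supported[OF jm(1,2) supp(3)] by blast
  obtain w0 w1 w2 where w: "u2 * v1 = trinomial j m w0 w1 w2"
    using trinomial_if_supported[OF jm(1,2) supp(4)] by blast
  have "(u1 * v1) * (u2 * v2) = (u1 * v2) * (u2 * v1)" by (simp add: algebra_simps)
  then have "trinomial j m x0 x1 x2 * trinomial j m y0 y1 y2 =
      trinomial j m z0 z1 z2 * trinomial j m w0 w1 w2"
    unfolding x y z w .
  note coeffs = trinomial_mult_eq_imp_coeffs[OF jm this]
  have "parallel3 x0 x1 x2 z0 z1 z2 \<or> parallel3 x0 x1 x2 w0 w1 w2"
    by (rule parallel3_of_product_eq[OF coeffs])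
  moreover have "proportional v1 v2" if "parallel3 x0 x1 x2 z0 z1 z2"
    by (rule proportional_if_parallel3[OF jm(1,2) x z that nz(1,4)])
  moreover have "proportional u1 u2" if "parallel3 x0 x1 x2 w0 w1 w2"
    using x w
    by (intro proportional_if_parallel3[OF jm(1,2) _ _ that nz(3,2)]) (simp_all add: mult.commute)
  ultimately show ?thesis by blast
qed

section \<open>Spans of products of univariate polynomials\<close>

inductive_set product_span :: "'a::idom poly set \<Rightarrow> 'a poly set \<Rightarrow> 'a poly set" for P Q where
  span_mult: "p \<in> P \<Longrightarrow> q \<in> Q \<Longrightarrow> p * q \<in> product_span P Q"
| span_zero: "0 \<in> product_span P Q"
| span_add: "x \<in> product_span P Q \<Longrightarrow> y \<in> product_span P Q \<Longrightarrow> x + y \<in> product_span P Q"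
| span_smult: "x \<in> product_span P Q \<Longrightarrow> smult c x \<in> product_span P Q"

lemma product_span_swap: "h \<in> product_span P Q \<Longrightarrow> h \<in> product_span Q P"
proof (induction rule: product_span.induct)
  case (span_mult p q)
  then show ?case using product_span.span_mult[of q Q p P] by (simp add: mult.commute)
qed (auto intro: product_span.intros)

lemma product_span_in_multiples:
  fixes P Q :: "'a::idom poly set"
  assumes p0: "p0 \<in> P" "p0 \<noteq> 0" and allp: "\<forall>p\<in>P. p \<noteq> 0 \<longrightarrow> proportional p p0"
    and degQ: "\<forall>q\<in>Q. degree q \<le> b" and h: "h \<in> product_span P Q"
  shows "\<exists>d s. d \<noteq> 0 \<and> degree s \<le> b \<and> smult d h = p0 * s"
  using h
proof (induction rule: product_span.induct)
  case (span_mult p q)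
  show ?case
  proof (cases "p = 0")
    case True
    then show ?thesis by (intro exI[of _ 1] exI[of _ 0]) simp
  next
    case False
    then obtain c d where cd: "d \<noteq> 0" "smult d p = smult c p0"
      using allp span_mult(1) unfolding proportional_def by blast
    have "smult d (p * q) = smult d p * q" by simp
    also have "\<dots> = p0 * smult c q" using cd(2) by simp
    finally have "smult d (p * q) = p0 * smult c q" .
    moreover have "degree (smult c q) \<le> b"
      using degQ span_mult(2) degree_smult_le order_trans by blast
    ultimately show ?thesis using cd(1) by blast
  qed
next
  case span_zero
  show ?case by (intro exI[of _ 1] exI[of _ 0]) simp
next
  case (span_add x y)
  then obtain d1 s1 d2 s2 where a: "d1 \<noteq> 0" "degree s1 \<le> b" "smult d1 x = p0 * s1"
    "d2 \<noteq> 0" "degree s2 \<le> b" "smult d2 y = p0 * s2" by blast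
  have "smult (d1 * d2) (x + y) = smult d2 (smult d1 x) + smult d1 (smult d2 y)"
    by (simp add: smult_add_right mult.commute)
  also have "\<dots> = smult d2 (p0 * s1) + smult d1 (p0 * s2)" using a(3,6) by simp
  also have "\<dots> = p0 * (smult d2 s1 + smult d1 s2)" by (simp add: distrib_left)
  finally have "smult (d1 * d2) (x + y) = p0 * (smult d2 s1 + smult d1 s2)" .
  moreover have "degree (smult d2 s1 + smult d1 s2) \<le> b"
    using a(2,5) degree_add_le degree_smult_le order_trans by meson
  moreover have "d1 * d2 \<noteq> 0" using a(1,4) by simp
  ultimately show ?case by blast
next
  case (span_smult x c)
  then obtain d s where a: "d \<noteq> 0" "degree s \<le> b" "smult d x = p0 * s" by blast
  have "smult d (smult c x) = smult c (smult d x)" by (simp add: mult.commute)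
  also have "\<dots> = p0 * smult c s" using a(3) by simp
  finally have "smult d (smult c x) = p0 * smult c s" .
  moreover have "degree (smult c s) \<le> b" using a(2) degree_smult_le order_trans by blast
  ultimately show ?case using a(1) by blast
qed

lemma product_span_degree_bound:
  fixes P Q :: "'a::idom poly set"
  assumes p0: "p0 \<in> P" "p0 \<noteq> 0" and allp: "\<forall>p\<in>P. p \<noteq> 0 \<longrightarrow> proportional p p0"
    and degQ: "\<forall>q\<in>Q. degree q \<le> b"
    and one: "1 \<in> product_span P Q" and top: "monom 1 m \<in> product_span P Q"
  shows "m \<le> b"
proof -
  obtain d s where a: "d \<noteq> 0" "degree s \<le> b" "smult d 1 = p0 * s"
    using product_span_in_multiples[OF p0 allp degQ one] by blast
  have "s \<noteq> 0" using a(1,3) by auto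
  then have "degree (p0 * s) = degree p0 + degree s"
    using p0(2) by (intro degree_mult_eq) simp_all
  moreover have "degree (p0 * s) = 0" using a(3)[symmetric] by simp
  ultimately have dp0: "degree p0 = 0" by simp
  obtain d' s' where b: "d' \<noteq> 0" "degree s' \<le> b" "smult d' (monom 1 m) = p0 * s'"
    using product_span_in_multiples[OF p0 allp degQ top] by blast
  have "s' \<noteq> 0" using b(1,3) by (auto simp: smult_monom)
  then have "degree (p0 * s') = degree p0 + degree s'"
    using p0(2) by (intro degree_mult_eq) simp_all
  moreover have "degree (p0 * s') = m"
    using b(1) b(3)[symmetric] by (simp add: smult_monom degree_monom_eq)
  ultimately have "degree s' = m" using dp0 by simp
  then show ?thesis using b(2) by simp
qed

lemma product_span_eq_0:
  assumes "\<forall>p\<in>P. p = 0" "h \<in> product_span P Q"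
  shows "h = 0"
  using assms(2) by (induction rule: product_span.induct) (use assms(1) in auto)

lemma monom_notin_product_span:
  fixes P Q :: "'a::idom poly set"
  assumes jm: "0 < j" "j < m" "m \<noteq> 2 * j"
    and ab: "a + b = m" "0 < a" "0 < b"
    and degP: "\<forall>p\<in>P. degree p \<le> a" and degQ: "\<forall>q\<in>Q. degree q \<le> b"
    and supp: "\<forall>p\<in>P. \<forall>q\<in>Q. poly_supported_in {0, j, m} (p * q)"
    and one: "1 \<in> product_span P Q"
  shows "monom 1 m \<notin> product_span P Q"
proof
  assume top: "monom 1 m \<in> product_span P Q"
  obtain p0 where p0: "p0 \<in> P" "p0 \<noteq> 0"
    using product_span_eq_0[OF _ one] by force
  obtain q0 where q0: "q0 \<in> Q" "q0 \<noteq> 0"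
    using product_span_eq_0[OF _ product_span_swap[OF one]] by force
  show False
  proof (cases "\<forall>q\<in>Q. q \<noteq> 0 \<longrightarrow> proportional q q0")
    case True
    then have "m \<le> a"
      using product_span_degree_bound[OF q0 _ degP]
        product_span_swap[OF one] product_span_swap[OF top] by blast
    then show False using ab by simp
  next
    case False
    then obtain v where v: "v \<in> Q" "v \<noteq> 0" "\<not> proportional v q0" by blast
    have "proportional p p0" if "p \<in> P" "p \<noteq> 0" for p
      using proportional_of_trinomial_products[OF jm that(2) p0(2) v(2) q0(2)]
        supp that(1) p0(1) v(1) q0(1) v(3) by blast
    then have "m \<le> b" using product_span_degree_bound[OF p0 _ degQ one top] by blast
    then show False using ab by simp
  qed
qed


section \<open>Forms in two variables\<close>

locale two_variables =
  fixes X Y :: "'n::finite"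
  assumes X_neq_Y: "X \<noteq> Y"
begin

definition xy_mon :: "nat \<Rightarrow> nat \<Rightarrow> ('n \<Rightarrow>\<^sub>0 nat)" where
  "xy_mon x y = Poly_Mapping.single X x + Poly_Mapping.single Y y"

lemma lookup_xy_mon_X [simp]: "lookup (xy_mon x y) X = x"
  using X_neq_Y by (simp add: xy_mon_def lookup_add lookup_single)

lemma lookup_xy_mon_Y [simp]: "lookup (xy_mon x y) Y = y"
  using X_neq_Y by (simp add: xy_mon_def lookup_add lookup_single)

lemma lookup_xy_mon_other: "i \<noteq> X \<Longrightarrow> i \<noteq> Y \<Longrightarrow> lookup (xy_mon x y) i = 0"
  by (simp add: xy_mon_def lookup_add lookup_single)

lemma deg_pm_xy_mon [simp]: "deg_pm (xy_mon x y) = x + y"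
  by (simp add: xy_mon_def deg_pm_add)

lemma xy_mon_eq_iff [simp]: "xy_mon x y = xy_mon x' y' \<longleftrightarrow> x = x' \<and> y = y'"
  by (metis lookup_xy_mon_X lookup_xy_mon_Y)

lemma monomial_dvd_xy_mon_iff: "monomial_dvd (xy_mon x' y') (xy_mon x y) \<longleftrightarrow> x' \<le> x \<and> y' \<le> y"
  unfolding monomial_dvd_def
  by (metis le_zero_eq lookup_xy_mon_X lookup_xy_mon_Y lookup_xy_mon_other order_refl)

lemma monomial_dvd_xy_mon_X_iff: "monomial_dvd (xy_mon x 0) \<mu> \<longleftrightarrow> x \<le> lookup \<mu> X"
  unfolding monomial_dvd_def xy_mon_def by (auto simp: lookup_add lookup_single when_def)

lemma monomial_dvd_xy_mon_Y_iff: "monomial_dvd (xy_mon 0 y) \<mu> \<longleftrightarrow> y \<le> lookup \<mu> Y"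
  unfolding monomial_dvd_def xy_mon_def by (auto simp: lookup_add lookup_single when_def)

lemma monomial_dvd_xy_mon: "monomial_dvd \<mu> (xy_mon x y) \<Longrightarrow> \<mu> = xy_mon (lookup \<mu> X) (lookup \<mu> Y)"
  by (rule poly_mapping_eqI)
    (metis le_zero_eq lookup_xy_mon_X lookup_xy_mon_Y lookup_xy_mon_other monomial_dvd_def)

lemma xy_mon_diff: "x' \<le> x \<Longrightarrow> y' \<le> y \<Longrightarrow> xy_mon x y - xy_mon x' y' = xy_mon (x - x') (y - y')"
  by (rule poly_mapping_eqI)
    (metis diff_zero lookup_minus lookup_xy_mon_X lookup_xy_mon_Y lookup_xy_mon_other)

lemma single_xy_mon_eq:
  "Poly_Mapping.single (xy_mon x y) 1 = (var X ^ x * var Y ^ y :: ('n, 'a::comm_ring_1) mpoly_ring)"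
  by (simp add: var_power mult_single xy_mon_def)

text \<open>The part of \<open>f\<close> of degree \<open>d\<close> in \<open>X\<close> and \<open>Y\<close> alone, dehomogenized at \<open>X = 1\<close>.\<close>

definition xy_form :: "nat \<Rightarrow> ('n, 'a::zero) mpoly_ring \<Rightarrow> 'a poly" where
  "xy_form d f = Poly (map (\<lambda>i. lookup f (xy_mon (d - i) i)) [0..<Suc d])"

lemma coeff_xy_form: "coeff (xy_form d f) i = (if i \<le> d then lookup f (xy_mon (d - i) i) else 0)"
  unfolding xy_form_def by (auto simp: nth_default_def simp del: upt_Suc)

lemma degree_xy_form: "degree (xy_form d f) \<le> d"
  by (rule degree_le) (simp add: coeff_xy_form)

lemma xy_form_add: "xy_form d (f + g) = xy_form d f + xy_form d g"
  by (rule poly_eqI) (simp add: coeff_xy_form lookup_add)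

lemma xy_form_0 [simp]: "xy_form d 0 = 0"
  by (rule poly_eqI) (simp add: coeff_xy_form)

lemma xy_form_single_xy_mon:
  "x + y = d \<Longrightarrow> xy_form d (Poly_Mapping.single (xy_mon x y) (1::'a::zero_neq_one)) = monom 1 y"
  by (rule poly_eqI) (auto simp: coeff_xy_form lookup_single when_def coeff_monom)

lemma xy_form_mult_low:
  fixes h r :: "('n, 'a::comm_semiring_0) mpoly_ring"
  assumes "\<forall>\<mu>\<in>keys h. d \<le> deg_pm \<mu>"
  shows "xy_form d (r * h) = smult (lookup r 0) (xy_form d h)"
proof (rule poly_eqI)
  fix i
  have "lookup (r * h) (xy_mon (d - i) i) = lookup r 0 * lookup h (xy_mon (d - i) i)" if "i \<le> d"
  proof (rule lookup_mult_unique_decomposition)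
    fix \<alpha> \<beta> assume \<alpha>\<beta>: "\<alpha> \<in> keys r" "\<beta> \<in> keys h" "\<alpha> + \<beta> = xy_mon (d - i) i"
    then have "deg_pm \<alpha> + deg_pm \<beta> = d"
      using that by (metis deg_pm_add deg_pm_xy_mon le_add_diff_inverse2)
    moreover have "d \<le> deg_pm \<beta>" using assms \<alpha>\<beta>(2) by blast
    ultimately show "\<alpha> = 0" by (simp flip: deg_pm_eq_0_iff)
  qed simp
  then show "coeff (xy_form d (r * h)) i = coeff (smult (lookup r 0) (xy_form d h)) i"
    by (simp add: coeff_xy_form)
qed


lemma lookup_mult_xy_mon_nonzero:
  fixes f g :: "('n, 'a::comm_semiring_0) mpoly_ring"
  assumes fa: "\<forall>\<mu>\<in>keys f. a \<le> deg_pm \<mu>" and gb: "\<forall>\<mu>\<in>keys g. b \<le> deg_pm \<mu>" and k: "k \<le> a + b"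
    and nz: "lookup f \<mu> * (if monomial_dvd \<mu> (xy_mon (a + b - k) k)
      then lookup g (xy_mon (a + b - k) k - \<mu>) else 0) \<noteq> 0"
  shows "\<mu> \<in> (\<lambda>i. xy_mon (a - i) i) ` {..k}"
proof -
  let ?\<kappa> = "xy_mon (a + b - k) k"
  have dvd: "monomial_dvd \<mu> ?\<kappa>" and "\<mu> \<in> keys f" "?\<kappa> - \<mu> \<in> keys g"
    using nz by (auto simp: in_keys_iff split: if_splits)
  then have "a \<le> deg_pm \<mu>" "b \<le> deg_pm ?\<kappa> - deg_pm \<mu>" "deg_pm \<mu> \<le> deg_pm ?\<kappa>"
    using fa gb deg_pm_diff[OF dvd] deg_pm_mono[OF dvd] by auto
  then have deg: "deg_pm \<mu> = a" using k by simp
  have \<mu>: "\<mu> = xy_mon (lookup \<mu> X) (lookup \<mu> Y)" using dvd by (rule monomial_dvd_xy_mon)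
  then have "lookup \<mu> Y \<le> k" using dvd by (metis monomial_dvd_xy_mon_iff)
  moreover have "lookup \<mu> X = a - lookup \<mu> Y"
    using deg \<mu> by (metis add_diff_cancel_right' deg_pm_xy_mon)
  ultimately show ?thesis using \<mu> by force
qed

lemma coeff_xy_form_mult:
  fixes f g :: "('n, 'a::comm_semiring_0) mpoly_ring"
  assumes fa: "\<forall>\<mu>\<in>keys f. a \<le> deg_pm \<mu>" and gb: "\<forall>\<mu>\<in>keys g. b \<le> deg_pm \<mu>" and k: "k \<le> a + b"
  shows "coeff (xy_form a f * xy_form b g) k = lookup (f * g) (xy_mon (a + b - k) k)"
proof -
  define \<kappa> where "\<kappa> = xy_mon (a + b - k) k"
  define t where "t = (\<lambda>\<mu>. lookup f \<mu> * (if monomial_dvd \<mu> \<kappa> then lookup g (\<kappa> - \<mu>) else 0))"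
  define \<phi> where "\<phi> = (\<lambda>i. xy_mon (a - i) i)"
  have inj: "inj_on \<phi> {..k}" unfolding \<phi>_def inj_on_def by simp
  have sub: "{\<mu>. t \<mu> \<noteq> 0} \<subseteq> \<phi> ` {..k}"
    using lookup_mult_xy_mon_nonzero[OF fa gb k] unfolding t_def \<kappa>_def \<phi>_def by blast
  have summand: "t (\<phi> i) = coeff (xy_form a f) i * coeff (xy_form b g) (k - i)" if "i \<le> k" for i
  proof (cases "i \<le> a \<and> k - i \<le> b")
    case True
    then have "monomial_dvd (\<phi> i) \<kappa>" "\<kappa> - \<phi> i = xy_mon (b - (k - i)) (k - i)"
      unfolding \<phi>_def \<kappa>_def using that k by (auto simp: monomial_dvd_xy_mon_iff xy_mon_diff)
    then show ?thesis using True by (simp add: t_def coeff_xy_form \<phi>_def)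
  next
    case False
    show ?thesis
    proof (cases "i \<le> a")
      case True
      then have "\<not> monomial_dvd (\<phi> i) \<kappa>"
        unfolding \<phi>_def \<kappa>_def using False that k by (simp add: monomial_dvd_xy_mon_iff)
      then show ?thesis using False True by (simp add: t_def coeff_xy_form)
    next
      case i_gt: False
      have "lookup g (\<kappa> - \<phi> i) = 0" if dvd: "monomial_dvd (\<phi> i) \<kappa>"
      proof -
        have "deg_pm (\<kappa> - \<phi> i) < b"
          unfolding deg_pm_diff[OF dvd] unfolding \<kappa>_def \<phi>_def using i_gt k \<open>i \<le> k\<close> by simp
        then show ?thesis using gb by (meson in_keys_iff leD)
      qed
      then show ?thesis using i_gt by (simp add: t_def coeff_xy_form)
    qed
  qed
  have "lookup (f * g) \<kappa> = Sum_any t" unfolding t_def by (rule lookup_mult_monomial_dvd)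
  also have "\<dots> = sum t (\<phi> ` {..k})" by (rule Sum_any.expand_superset[OF _ sub]) simp
  also have "\<dots> = (\<Sum>i\<le>k. t (\<phi> i))" by (rule sum.reindex[OF inj, unfolded comp_def])
  also have "\<dots> = (\<Sum>i\<le>k. coeff (xy_form a f) i * coeff (xy_form b g) (k - i))"
    using summand by simp
  also have "\<dots> = coeff (xy_form a f * xy_form b g) k"
    by (simp add: coeff_mult atMost_atLeast0)
  finally show ?thesis unfolding \<kappa>_def ..
qed

lemma xy_form_mult:
  fixes f g :: "('n, 'a::comm_semiring_0) mpoly_ring"
  assumes "\<forall>\<mu>\<in>keys f. a \<le> deg_pm \<mu>" "\<forall>\<mu>\<in>keys g. b \<le> deg_pm \<mu>"
  shows "xy_form (a + b) (f * g) = xy_form a f * xy_form b g"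
proof (rule poly_eqI)
  fix k
  show "coeff (xy_form (a + b) (f * g)) k = coeff (xy_form a f * xy_form b g) k"
  proof (cases "k \<le> a + b")
    case True
    then show ?thesis using coeff_xy_form_mult[OF assms True] by (simp add: coeff_xy_form)
  next
    case False
    have "degree (xy_form a f * xy_form b g) \<le> a + b"
      using degree_mult_le[of "xy_form a f" "xy_form b g"]
        degree_xy_form[of a f] degree_xy_form[of b g] by linarith
    then show ?thesis using False by (simp add: coeff_xy_form coeff_eq_0)
  qed
qed


lemma xy_form_ideal_mult_in_product_span:
  fixes A B :: "('n, 'a::idom) mpoly_ring set"
  assumes low_A: "\<forall>f\<in>A. \<forall>\<mu>\<in>keys f. a \<le> deg_pm \<mu>" and low_B: "\<forall>g\<in>B. \<forall>\<mu>\<in>keys g. b \<le> deg_pm \<mu>"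
    and h: "h \<in> ideal_mult A B"
  shows "xy_form (a + b) h \<in> product_span (xy_form a ` A) (xy_form b ` B)"
proof -
  define T where "T = {h. (\<forall>\<mu>\<in>keys h. a + b \<le> deg_pm \<mu>) \<and>
    xy_form (a + b) h \<in> product_span (xy_form a ` A) (xy_form b ` B)}"
  have "is_ideal T"
    unfolding is_ideal_def
  proof (intro conjI ballI allI)
    show "0 \<in> T" unfolding T_def by (simp add: product_span.span_zero)
  next
    fix x y assume "x \<in> T" "y \<in> T"
    then show "x + y \<in> T" unfolding T_def using keys_add[of x y]
      by (auto simp: xy_form_add intro: product_span.span_add)
  next
    fix r x assume x: "x \<in> T"
    have "\<forall>\<mu>\<in>keys (r * x). a + b \<le> deg_pm \<mu>"
      using keys_mult[of r x] x unfolding T_def by (fastforce simp: deg_pm_add)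
    then show "r * x \<in> T"
      using x unfolding T_def by (auto simp: xy_form_mult_low intro: product_span.span_smult)
  qed
  moreover have "f * g \<in> T" if "f \<in> A" "g \<in> B" for f g
  proof -
    have "\<forall>\<mu>\<in>keys (f * g). a + b \<le> deg_pm \<mu>"
      using keys_mult[of f g] low_A low_B that by (fastforce simp: deg_pm_add)
    moreover have "xy_form (a + b) (f * g) \<in> product_span (xy_form a ` A) (xy_form b ` B)"
      using that low_A low_B by (simp add: xy_form_mult product_span.span_mult)
    ultimately show ?thesis unfolding T_def by blast
  qed
  ultimately have "ideal_mult A B \<subseteq> T" by (rule ideal_mult_minimal)
  then show ?thesis using h unfolding T_def by blast
qed
end


section \<open>The ideal generated by \<open>X ^ m\<close>, \<open>X ^ (m - j) * Y ^ j\<close> and \<open>Y ^ m\<close>\<close>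

locale xy_monomial_ideal = two_variables X Y for X Y :: "'n::finite" +
  fixes m j :: nat
  assumes j_pos: "0 < j" and j_less: "j < m"
begin

definition gen_mons :: "('n \<Rightarrow>\<^sub>0 nat) set" where
  "gen_mons = {xy_mon m 0, xy_mon (m - j) j, xy_mon 0 m}"

definition gen_ideal :: "('n, 'a::comm_ring_1) mpoly_ring set" where
  "gen_ideal = ideal_gen ((\<lambda>\<mu>. Poly_Mapping.single \<mu> 1) ` gen_mons)"

lemma gen_ideal_eq:
  "ideal_gen {var X ^ m, var X ^ (m - j) * var Y ^ j, var Y ^ m} = gen_ideal"
  unfolding gen_ideal_def gen_mons_def by (simp add: single_xy_mon_eq)

lemma is_ideal_gen_ideal: "is_ideal gen_ideal"
  unfolding gen_ideal_def by (rule ideal_gen_is_ideal)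

lemma single_in_gen_ideal:
  "\<mu> \<in> gen_mons \<Longrightarrow> Poly_Mapping.single \<mu> (1::'a::comm_ring_1) \<in> gen_ideal"
  unfolding gen_ideal_def
  using ideal_gen_superset[of "(\<lambda>\<mu>. Poly_Mapping.single \<mu> (1::'a)) ` gen_mons"] by blast

lemma keys_gen_ideal: "h \<in> gen_ideal \<Longrightarrow> \<mu> \<in> keys h \<Longrightarrow> \<exists>e\<in>gen_mons. monomial_dvd e \<mu>"
  unfolding gen_ideal_def by (rule keys_of_monomial_ideal)

lemma deg_pm_ge_if_gen_dvd: "e \<in> gen_mons \<Longrightarrow> monomial_dvd e \<mu> \<Longrightarrow> m \<le> deg_pm \<mu>"
  unfolding gen_mons_def using deg_pm_mono[of e \<mu>] j_less by auto

lemma gen_dvd_deg_pm_eq: "e \<in> gen_mons \<Longrightarrow> monomial_dvd e \<mu> \<Longrightarrow> deg_pm \<mu> = m \<Longrightarrow> \<mu> \<in> gen_mons"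
  unfolding gen_mons_def using monomial_dvd_deg_pm_eq[of e \<mu>] j_less by auto

lemma gen_dvd_Y_free:
  assumes "e \<in> gen_mons" "monomial_dvd e \<mu>" "lookup \<mu> Y = 0"
  shows "m \<le> lookup \<mu> X"
proof -
  have "lookup e X \<le> lookup \<mu> X" "lookup e Y \<le> lookup \<mu> Y"
    using assms(2) unfolding monomial_dvd_def by auto
  then show ?thesis using assms(1,3) j_pos j_less unfolding gen_mons_def by auto
qed

lemma one_notin_gen_ideal: "1 \<notin> gen_ideal"
proof
  assume "1 \<in> gen_ideal"
  then obtain e where "e \<in> gen_mons" "monomial_dvd e 0" using keys_gen_ideal by fastforce
  then have "m \<le> deg_pm (0 :: 'n \<Rightarrow>\<^sub>0 nat)" by (rule deg_pm_ge_if_gen_dvd)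
  then show False using j_less by simp
qed

lemma nz_ideal_gen_ideal: "nz_ideal (gen_ideal :: ('n, 'a::comm_ring_1) mpoly_ring set)"
proof -
  have "Poly_Mapping.single (xy_mon m 0) 1 \<in> (gen_ideal :: ('n, 'a) mpoly_ring set)"
    by (simp add: single_in_gen_ideal gen_mons_def)
  moreover have "Poly_Mapping.single (xy_mon m 0) (1::'a) \<noteq> 0" by simp
  ultimately show ?thesis unfolding nz_ideal_def using is_ideal_gen_ideal by blast
qed


lemma not_atom_if_square:
  assumes "m = 2 * j"
  shows "\<not> ideal_atom (gen_ideal :: ('n, 'a::comm_ring_1) mpoly_ring set)"
proof
  let ?x = "var X ^ j :: ('n, 'a) mpoly_ring" and ?y = "var Y ^ j :: ('n, 'a) mpoly_ring"
  let ?J = "ideal_gen {?x, ?y}"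
  assume atom: "ideal_atom (gen_ideal :: ('n, 'a) mpoly_ring set)"
  have "{var X ^ m, var X ^ (m - j) * var Y ^ j, var Y ^ m} = {?x * ?x, ?x * ?y, ?y * ?y}"
    using assms by (simp add: mult_2 flip: power_add)
  then have "gen_ideal = ideal_gen {?x * ?x, ?x * ?y, ?y * ?y}"
    unfolding gen_ideal_eq[symmetric] by (rule arg_cong)
  then have split: "gen_ideal = ideal_mult ?J ?J" by (simp add: ideal_gen_square_pair)
  have "?x \<in> ?J" using ideal_gen_superset[of "{?x, ?y}"] by blast
  moreover have "?x \<noteq> 0" by (simp add: var_power)
  ultimately have nz: "nz_ideal ?J"
    unfolding nz_ideal_def using ideal_gen_is_ideal[of "{?x, ?y}"] by auto
  have "is_ideal {h :: ('n, 'a) mpoly_ring. \<forall>\<nu>\<in>keys h. 0 < deg_pm \<nu>}"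
    by (rule is_ideal_keys_upward_closed) (simp add: deg_pm_add)
  moreover have "{?x, ?y} \<subseteq> {h. \<forall>\<nu>\<in>keys h. 0 < deg_pm \<nu>}"
    using j_pos by (simp add: var_power)
  ultimately have sub: "?J \<subseteq> {h. \<forall>\<nu>\<in>keys h. 0 < deg_pm \<nu>}" by (rule ideal_gen_minimal)
  have notin: "(1 :: ('n, 'a) mpoly_ring) \<notin> {h. \<forall>\<nu>\<in>keys h. 0 < deg_pm \<nu>}"
    by simp
  have "?J \<noteq> UNIV"
  proof
    assume "?J = UNIV"
    then have "(1 :: ('n, 'a) mpoly_ring) \<in> {h. \<forall>\<nu>\<in>keys h. 0 < deg_pm \<nu>}" using sub by blast
    then show False using notin by contradiction
  qed
  moreover have "?J = UNIV \<or> ?J = UNIV"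
    using atom nz split unfolding ideal_atom_def by blast
  ultimately show False by simp
qed


text \<open>Since \<open>f0 g \<in> I\<close> and \<open>f0\<close> has a nonzero constant term, every \<open>g \<in> B\<close> becomes divisible
  by \<open>X ^ m\<close> once \<open>Y\<close> is set to zero.\<close>

lemma eq_UNIV_if_constant_term:
  fixes A B :: "('n, 'a::idom) mpoly_ring set"
  assumes A: "is_ideal A" and split: "gen_ideal = ideal_mult A B"
    and f0: "f0 \<in> A" "lookup f0 0 \<noteq> 0"
  shows "A = UNIV"
proof -
  let ?E = "Poly_Mapping.single (xy_mon m 0) (1::'a)"
  have E: "?E \<in> gen_ideal" by (simp add: single_in_gen_ideal gen_mons_def)
  have B_factor: "\<exists>g'. subst_zero Y g = g' * ?E" if g: "g \<in> B" for g
  proof -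
    let ?S = "{\<mu>. lookup \<mu> Y = 0 \<and> lookup \<mu> X < m}"
    have fg: "f0 * g \<in> gen_ideal" unfolding split using f0(1) g by (rule mult_in_ideal_mult)
    have "\<mu> \<notin> ?S" if \<mu>: "\<mu> \<in> keys (f0 * g)" for \<mu>
    proof -
      obtain e where "e \<in> gen_mons" "monomial_dvd e \<mu>" using keys_gen_ideal[OF fg \<mu>] by auto
      then show ?thesis using gen_dvd_Y_free by fastforce
    qed
    then have "keys (f0 * g) \<inter> ?S = {}" by blast
    then have "keys g \<inter> ?S = {}"
      by (rule keys_disjoint_if_mult_keys_disjoint[OF f0(2), rotated])
        (auto simp: monomial_dvd_def intro: le_less_trans dest: spec[of _ X] spec[of _ Y])
    then have "\<forall>\<mu>\<in>keys (subst_zero Y g). monomial_dvd (xy_mon m 0) \<mu>"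
      by (auto simp: monomial_dvd_xy_mon_X_iff in_keys_iff lookup_subst_zero split: if_splits)
    then show ?thesis by (metis keys_monomial_dvd_imp_factor)
  qed
  have E_fixed: "subst_zero Y ?E = ?E" by (simp add: subst_zero_single)
  obtain \<alpha> where \<alpha>: "\<alpha> \<in> A" "subst_zero Y ?E = subst_zero Y \<alpha> * ?E"
    using ideal_mult_subst_zero_factor[OF A _ B_factor E_fixed] E unfolding split by blast
  then have "1 * ?E = subst_zero Y \<alpha> * ?E" using E_fixed by simp
  then have \<alpha>1: "subst_zero Y \<alpha> = 1" by (rule mult_single_one_cancel[symmetric])
  define c where "c = 1 - \<alpha>"
  have "subst_zero Y c = 0" by (simp add: c_def subst_zero_diff subst_zero_one \<alpha>1)
  then have "\<forall>\<mu>\<in>keys (c ^ m). monomial_dvd (xy_mon 0 m) \<mu>"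
    by (simp add: monomial_dvd_xy_mon_Y_iff keys_power_if_subst_zero_eq_0)
  then have "c ^ m \<in> gen_ideal"
    unfolding gen_ideal_def by (rule in_monomial_ideal[rotated]) (simp add: gen_mons_def)
  then have "c ^ m \<in> A" using split ideal_mult_subset_left[OF A] by blast
  moreover have "1 - c ^ m \<in> A"
    using is_ideal_mult_right[OF A \<alpha>(1)] by (simp add: one_diff_power_eq c_def)
  ultimately have "(1 - c ^ m) + c ^ m \<in> A" by (rule is_ideal_add[OF A, rotated])
  then show ?thesis using is_ideal_eq_UNIV[OF A] by simp
qed


lemma xy_form_gen_ideal_supported:
  assumes "h \<in> (gen_ideal :: ('n, 'a::comm_ring_1) mpoly_ring set)"
  shows "poly_supported_in {0, j, m} (xy_form m h)"
  unfolding poly_supported_in_def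
proof (intro allI impI)
  fix k assume k: "k \<notin> {0, j, m}"
  show "coeff (xy_form m h) k = 0"
  proof (rule ccontr)
    assume nz: "coeff (xy_form m h) k \<noteq> 0"
    then have "k \<le> m" "xy_mon (m - k) k \<in> keys h"
      by (simp_all add: coeff_xy_form in_keys_iff split: if_splits)
    then obtain e where e: "e \<in> gen_mons" "monomial_dvd e (xy_mon (m - k) k)"
      using keys_gen_ideal[OF assms] by blast
    moreover have "deg_pm (xy_mon (m - k) k) = m" using \<open>k \<le> m\<close> by simp
    ultimately have "xy_mon (m - k) k \<in> gen_mons" by (rule gen_dvd_deg_pm_eq)
    then show False using k \<open>k \<le> m\<close> j_less unfolding gen_mons_def by auto
  qed
qed

lemma no_split_positive_degrees:
  fixes A B :: "('n, 'a::idom) mpoly_ring set"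
  assumes square: "m \<noteq> 2 * j" and split: "gen_ideal = ideal_mult A B"
    and low_A: "\<forall>f\<in>A. \<forall>\<mu>\<in>keys f. a \<le> deg_pm \<mu>" and low_B: "\<forall>g\<in>B. \<forall>\<mu>\<in>keys g. b \<le> deg_pm \<mu>"
    and ab: "a + b = m" "0 < a" "0 < b"
  shows False
proof -
  define P where "P = xy_form a ` A"
  define Q where "Q = xy_form b ` B"
  have supp: "\<forall>p\<in>P. \<forall>q\<in>Q. poly_supported_in {0, j, m} (p * q)"
    unfolding P_def Q_def
    using xy_form_mult[of _ a _ b] low_A low_B ab(1) xy_form_gen_ideal_supported
      mult_in_ideal_mult split by fastforce
  have span: "xy_form m h \<in> product_span P Q" if "h \<in> gen_ideal" for h
    using xy_form_ideal_mult_in_product_span[OF low_A low_B] that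
    unfolding P_def Q_def split ab(1) by blast
  have "1 \<in> product_span P Q" "monom 1 m \<in> product_span P Q"
    using span[of "Poly_Mapping.single (xy_mon m 0) 1"]
      span[of "Poly_Mapping.single (xy_mon 0 m) 1"]
    by (simp_all add: single_in_gen_ideal gen_mons_def xy_form_single_xy_mon)
  moreover have "\<forall>p\<in>P. degree p \<le> a" "\<forall>q\<in>Q. degree q \<le> b"
    unfolding P_def Q_def by (simp_all add: degree_xy_form)
  ultimately show False
    using monom_notin_product_span[OF j_pos j_less square ab _ _ supp] by blast
qed

lemma lowest_degrees_add:
  fixes A B :: "('n, 'a::idom) mpoly_ring set"
  assumes split: "gen_ideal = ideal_mult A B"
    and f0: "f0 \<in> A" "is_least_key f0 \<mu>0" and low_A: "\<forall>f\<in>A. \<forall>\<mu>\<in>keys f. deg_pm \<mu>0 \<le> deg_pm \<mu>"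
    and g0: "g0 \<in> B" "is_least_key g0 \<nu>0" and low_B: "\<forall>g\<in>B. \<forall>\<mu>\<in>keys g. deg_pm \<nu>0 \<le> deg_pm \<mu>"
  shows "deg_pm \<mu>0 + deg_pm \<nu>0 = m"
proof (rule antisym)
  let ?T = "{h :: ('n, 'a) mpoly_ring. \<forall>\<mu>\<in>keys h. deg_pm \<mu>0 + deg_pm \<nu>0 \<le> deg_pm \<mu>}"
  have "is_ideal ?T" by (rule is_ideal_keys_upward_closed) (simp add: deg_pm_add)
  moreover have "f * g \<in> ?T" if "f \<in> A" "g \<in> B" for f g
    using keys_mult[of f g] low_A low_B that by (fastforce simp: deg_pm_add)
  ultimately have "gen_ideal \<subseteq> ?T" unfolding split by (rule ideal_mult_minimal)
  moreover have "Poly_Mapping.single (xy_mon m 0) (1::'a) \<in> gen_ideal"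
    by (simp add: single_in_gen_ideal gen_mons_def)
  ultimately show "deg_pm \<mu>0 + deg_pm \<nu>0 \<le> m" by auto
next
  have "f0 * g0 \<in> gen_ideal" unfolding split using f0(1) g0(1) by (rule mult_in_ideal_mult)
  moreover have "\<mu>0 + \<nu>0 \<in> keys (f0 * g0)" using f0(2) g0(2) by (rule least_key_mult)
  ultimately obtain e where "e \<in> gen_mons" "monomial_dvd e (\<mu>0 + \<nu>0)"
    using keys_gen_ideal by blast
  then show "m \<le> deg_pm \<mu>0 + deg_pm \<nu>0" by (metis deg_pm_ge_if_gen_dvd deg_pm_add)
qed

lemma atom_if_not_square:
  assumes square: "m \<noteq> 2 * j"
  shows "ideal_atom (gen_ideal :: ('n, 'a::idom) mpoly_ring set)"
  unfolding ideal_atom_def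
proof (intro conjI allI impI)
  show "nz_ideal (gen_ideal :: ('n, 'a) mpoly_ring set)" by (rule nz_ideal_gen_ideal)
  show "gen_ideal \<noteq> (UNIV :: ('n, 'a) mpoly_ring set)" using one_notin_gen_ideal by blast
next
  fix A B :: "('n, 'a) mpoly_ring set"
  assume A: "nz_ideal A" and B: "nz_ideal B" and split: "gen_ideal = ideal_mult A B"
  have "is_ideal A" "is_ideal B" using A B unfolding nz_ideal_def by blast+
  obtain f g where "f \<in> A" "f \<noteq> 0" "g \<in> B" "g \<noteq> 0"
    using A B unfolding nz_ideal_def is_ideal_def by blast
  obtain f0 \<mu>0 where f0: "f0 \<in> A" "is_least_key f0 \<mu>0"
    and low_A: "\<forall>f\<in>A. \<forall>\<mu>\<in>keys f. deg_pm \<mu>0 \<le> deg_pm \<mu>"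
    by (rule obtain_lowest_degree_key[OF \<open>f \<in> A\<close> \<open>f \<noteq> 0\<close>])
  obtain g0 \<nu>0 where g0: "g0 \<in> B" "is_least_key g0 \<nu>0"
    and low_B: "\<forall>g\<in>B. \<forall>\<mu>\<in>keys g. deg_pm \<nu>0 \<le> deg_pm \<mu>"
    by (rule obtain_lowest_degree_key[OF \<open>g \<in> B\<close> \<open>g \<noteq> 0\<close>])
  have ab: "deg_pm \<mu>0 + deg_pm \<nu>0 = m"
    using split f0 low_A g0 low_B by (rule lowest_degrees_add)
  have constant_term: "lookup f 0 \<noteq> 0" if "is_least_key f \<mu>" "deg_pm \<mu> = 0" for f \<mu>
    using that by (simp add: deg_pm_eq_0_iff is_least_key_def in_keys_iff)
  consider "deg_pm \<mu>0 = 0" | "deg_pm \<nu>0 = 0" | "0 < deg_pm \<mu>0" "0 < deg_pm \<nu>0" by linarith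
  then show "A = UNIV \<or> B = UNIV"
  proof cases
    case 1
    then show ?thesis
      using eq_UNIV_if_constant_term[OF \<open>is_ideal A\<close> split f0(1)] f0(2) constant_term by blast
  next
    case 2
    have "gen_ideal = ideal_mult B A" using split by (simp add: ideal_mult_commute)
    then show ?thesis
      using eq_UNIV_if_constant_term[OF \<open>is_ideal B\<close> _ g0(1)] g0(2) 2 constant_term by blast
  next
    case 3
    then show ?thesis
      using no_split_positive_degrees[OF square split low_A low_B ab] by blast
  qed
qed

end

theorem corollary3p4:
  fixes X Y :: "'n::finite" and m j :: nat
  assumes "CARD('n) \<ge> 2"
    and "X \<noteq> Y"
    and "ideal_monoid_BF TYPE(('n, 'a::idom) mpoly_ring)"
    and "m \<ge> 2" and "1 \<le> j" and "j \<le> m - 1"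
  shows "ideal_atom (ideal_gen {(var X :: ('n, 'a) mpoly_ring) ^ m,
                                 var X ^ (m - j) * var Y ^ j,
                                 var Y ^ m})
         \<longleftrightarrow> m \<noteq> 2 * j"
proof -
  interpret xy_monomial_ideal X Y m j
    using assms by unfold_locales auto
  show ?thesis
    unfolding gen_ideal_eq using not_atom_if_square atom_if_not_square by blast
qed

end
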